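(* Let $I,J\subseteq\mathbb{R}$ be (possibly unbounded) intervals and let $f:I\times J\to\mathbb{R}$ be such that $\int f\,d\alpha=\int f\,d\beta$ whenever $\alpha$ and $\beta$ are competitors concentrated on $I\times J$. Then $f$ admits a representation $f(x,y)=\phi(x)+\psi(y)+k(x)y$ for some functions $\phi,k$ on $I$ and $\psi$ on $J$.
   Context: For a finite measure $\alpha$ on $\mathbb{R}^2$ write $\alpha_0,\alpha_1$ for its marginals and $(\alpha_x)_x$ for a disintegration with respect to $\alpha_0$. Two finite measures $\alpha,\beta$ on $\mathbb{R}^2$ are competitors if they have the same first and second marginals and for $\alpha_0$-a.e. $x$, $\int y\,\alpha_x(dy)=\int y\,\beta_x(dy)$. *)

theory Defs
  imports "HOL-Probability.Probability"
begin

definition marg0 :: "(real \<times> real) measure \<Rightarrow> real measure" where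
  "marg0 \<alpha> = distr \<alpha> borel fst"

definition marg1 :: "(real \<times> real) measure \<Rightarrow> real measure" where
  "marg1 \<alpha> = distr \<alpha> borel snd"

definition disintegration :: "(real \<times> real) measure \<Rightarrow> (real \<Rightarrow> real measure) \<Rightarrow> bool" where
  "disintegration \<alpha> K \<longleftrightarrow>
     K \<in> measurable borel (prob_algebra borel) \<and>
     (\<forall>A \<in> sets borel. \<forall>B \<in> sets borel.
        emeasure \<alpha> (A \<times> B) = (\<integral>\<^sup>+ x \<in> A. emeasure (K x) B \<partial>marg0 \<alpha>))"

definition competitors :: "(real \<times> real) measure \<Rightarrow> (real \<times> real) measure \<Rightarrow> bool" where
  "competitors \<alpha> \<beta> \<longleftrightarrow>
     finite_measure \<alpha> \<and> finite_measure \<beta> \<and>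
     sets \<alpha> = sets borel \<and> sets \<beta> = sets borel \<and>
     marg0 \<alpha> = marg0 \<beta> \<and> marg1 \<alpha> = marg1 \<beta> \<and>
     (\<exists>K L. disintegration \<alpha> K \<and> disintegration \<beta> L \<and>
        (AE x in marg0 \<alpha>. integrable (K x) (\<lambda>y. y) \<and> integrable (L x) (\<lambda>y. y) \<and>
           (\<integral> y. y \<partial>K x) = (\<integral> y. y \<partial>L x)))"

definition concentrated_on :: "(real \<times> real) measure \<Rightarrow> (real \<times> real) set \<Rightarrow> bool" where
  "concentrated_on \<alpha> S \<longleftrightarrow> (AE z in \<alpha>. z \<in> S)"

end

theory Submission
  imports Defs
begin

text \<open>If \<open>a \<noteq> b\<close> and \<open>P\<close>, \<open>Q\<close> are finitely supported laws on \<open>J\<close> with the same mean, then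
  \<open>\<alpha> = (\<delta>\<^sub>a \<otimes> P + \<delta>\<^sub>b \<otimes> Q) / 2\<close> and \<open>\<beta> = (\<delta>\<^sub>a \<otimes> Q + \<delta>\<^sub>b \<otimes> P) / 2\<close> are competitors, so
  \<open>\<integral> f(a,\<cdot>) dP + \<integral> f(b,\<cdot>) dQ = \<integral> f(a,\<cdot>) dQ + \<integral> f(b,\<cdot>) dP\<close>. Taking for \<open>P\<close> the law with
  masses \<open>t\<close>, \<open>1 - t\<close> at \<open>y\<^sub>1\<close>, \<open>y\<^sub>3\<close> and for \<open>Q\<close> the Dirac mass at their barycentre shows that
  \<open>y \<mapsto> f(b,y) - f(a,y)\<close> preserves convex combinations on the interval \<open>J\<close>, hence is affine.
  Fixing \<open>a\<close> gives the representation with \<open>\<psi> = f(a,\<cdot>)\<close>.\<close>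

text \<open>\<open>measure_pmf\<close> carries the discrete \<open>\<sigma>\<close>-algebra; competitors must be Borel measures.\<close>

definition borel_pmf :: "'a::topological_space pmf \<Rightarrow> 'a measure" where
  "borel_pmf p = distr (measure_pmf p) borel id"

lemma sets_borel_pmf [simp, measurable_cong]: "sets (borel_pmf p) = sets borel"
  by (simp add: borel_pmf_def)

lemma space_borel_pmf [simp]: "space (borel_pmf p) = UNIV"
  by (simp add: borel_pmf_def)

lemma prob_space_borel_pmf: "prob_space (borel_pmf p)"
  unfolding borel_pmf_def by (rule measure_pmf.prob_space_distr) simp

lemma borel_pmf_in_prob_algebra: "borel_pmf p \<in> space (prob_algebra borel)"
  by (simp add: space_prob_algebra prob_space_borel_pmf)

lemma emeasure_borel_pmf: "A \<in> sets borel \<Longrightarrow> emeasure (borel_pmf p) A = emeasure (measure_pmf p) A"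
  unfolding borel_pmf_def by (subst emeasure_distr) auto

lemma AE_borel_pmf:
  "{x. P x} \<in> sets borel \<Longrightarrow> (AE x in borel_pmf p. P x) \<longleftrightarrow> (\<forall>x\<in>set_pmf p. P x)"
  unfolding borel_pmf_def by (subst AE_distr_iff) (auto simp: AE_measure_pmf_iff)

lemma distr_borel_pmf:
  assumes "g \<in> borel_measurable borel"
  shows "distr (borel_pmf p) borel g = borel_pmf (map_pmf g p)"
proof (rule measure_eqI)
  fix A assume "A \<in> sets (distr (borel_pmf p) borel g)"
  then have A: "A \<in> sets borel" by simp
  then have "g -` A \<in> sets borel"
    using assms by (auto intro: measurable_sets_borel)
  with A assms show "emeasure (distr (borel_pmf p) borel g) A = emeasure (borel_pmf (map_pmf g p)) A"
    by (simp add: emeasure_distr emeasure_borel_pmf)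
qed simp

lemma integrable_borel_pmf_finite:
  fixes h :: "'a::topological_space \<Rightarrow> 'b::{banach, second_countable_topology}"
  assumes "h \<in> borel_measurable borel" and "finite (set_pmf p)"
  shows "integrable (borel_pmf p) h"
  unfolding borel_pmf_def using assms
  by (subst integrable_distr_eq) (auto intro: integrable_measure_pmf_finite)

lemma integral_borel_pmf:
  fixes h :: "'a::topological_space \<Rightarrow> 'b::{banach, second_countable_topology}"
  assumes "h \<in> borel_measurable borel"
  shows "integral\<^sup>L (borel_pmf p) h = integral\<^sup>L (measure_pmf p) h"
  unfolding borel_pmf_def using assms by (subst integral_distr) auto

lemma concentrated_on_borel_pmf:
  "S \<in> sets borel \<Longrightarrow> set_pmf p \<subseteq> S \<Longrightarrow> concentrated_on (borel_pmf p) S"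
  unfolding concentrated_on_def by (subst AE_borel_pmf) auto

lemma set_integrable_borel_pmf_finite:
  fixes f :: "'a::topological_space \<Rightarrow> real"
  assumes "S \<in> sets borel" and "f \<in> borel_measurable (restrict_space borel S)"
    and "finite (set_pmf p)"
  shows "set_integrable (borel_pmf p) S f"
  unfolding set_integrable_def using assms
  by (intro integrable_borel_pmf_finite) (simp add: borel_measurable_restrict_space_iff)

lemma set_integral_borel_pmf:
  fixes f :: "'a::topological_space \<Rightarrow> real"
  assumes S: "S \<in> sets borel" and f: "f \<in> borel_measurable (restrict_space borel S)"
    and "set_pmf p \<subseteq> S"
  shows "(LINT z:S|borel_pmf p. f z) = measure_pmf.expectation p f"
proof -
  have "(LINT z:S|borel_pmf p. f z) = measure_pmf.expectation p (\<lambda>z. indicator S z *\<^sub>R f z)"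
    unfolding set_lebesgue_integral_def using S f
    by (intro integral_borel_pmf) (simp add: borel_measurable_restrict_space_iff)
  also have "\<dots> = measure_pmf.expectation p f"
    using \<open>set_pmf p \<subseteq> S\<close> by (intro integral_cong_AE) (auto simp: AE_measure_pmf_iff)
  finally show ?thesis .
qed

definition joint_pmf :: "'a pmf \<Rightarrow> ('a \<Rightarrow> 'b pmf) \<Rightarrow> ('a \<times> 'b) pmf" where
  "joint_pmf \<mu> K = bind_pmf \<mu> (\<lambda>x. map_pmf (Pair x) (K x))"

lemma map_fst_joint_pmf: "map_pmf fst (joint_pmf \<mu> K) = \<mu>"
  by (simp add: joint_pmf_def map_bind_pmf map_pmf_comp o_def bind_return_pmf' flip: map_pmf_def)

lemma map_snd_joint_pmf: "map_pmf snd (joint_pmf \<mu> K) = bind_pmf \<mu> K"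
  by (simp add: joint_pmf_def map_bind_pmf map_pmf_comp o_def)

lemma set_joint_pmf: "set_pmf (joint_pmf \<mu> K) = (SIGMA x:set_pmf \<mu>. set_pmf (K x))"
  by (auto simp: joint_pmf_def)

lemma marg0_borel_joint_pmf: "marg0 (borel_pmf (joint_pmf \<mu> K)) = borel_pmf \<mu>"
  unfolding marg0_def by (subst distr_borel_pmf) (auto simp: map_fst_joint_pmf simp flip: borel_prod)

lemma marg1_borel_joint_pmf: "marg1 (borel_pmf (joint_pmf \<mu> K)) = borel_pmf (bind_pmf \<mu> K)"
  unfolding marg1_def by (subst distr_borel_pmf) (auto simp: map_snd_joint_pmf simp flip: borel_prod)

lemma Times_in_sets_borel:
  fixes A :: "'a::second_countable_topology set" and B :: "'b::second_countable_topology set"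
  shows "A \<in> sets borel \<Longrightarrow> B \<in> sets borel \<Longrightarrow> A \<times> B \<in> sets borel"
  unfolding borel_prod[symmetric] by (rule pair_measureI)

lemma disintegration_borel_joint_pmf:
  assumes K: "(\<lambda>x. borel_pmf (K x)) \<in> measurable borel (prob_algebra borel)"
  shows "disintegration (borel_pmf (joint_pmf \<mu> K)) (\<lambda>x. borel_pmf (K x))"
  unfolding disintegration_def
proof (intro conjI ballI K)
  fix A B :: "real set" assume A: "A \<in> sets borel" and B: "B \<in> sets borel"
  have KB: "(\<lambda>x. emeasure (borel_pmf (K x)) B) \<in> borel_measurable borel"
    using measurable_compose[OF measurable_prob_algebraD[OF K]
        measurable_emeasure_subprob_algebra[of B borel]] B by simp
  have "emeasure (borel_pmf (joint_pmf \<mu> K)) (A \<times> B) = (\<integral>\<^sup>+ x. indicator A x * emeasure (K x) B \<partial>\<mu>)"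
    using A B by (auto simp: emeasure_borel_pmf Times_in_sets_borel joint_pmf_def
        intro!: nn_integral_cong split: split_indicator)
  also have "\<dots> = (\<integral>\<^sup>+ x\<in>A. emeasure (borel_pmf (K x)) B \<partial>borel_pmf \<mu>)"
    using A B KB unfolding borel_pmf_def[of \<mu>]
    by (subst nn_integral_distr) (auto simp: emeasure_borel_pmf mult.commute)
  finally show "emeasure (borel_pmf (joint_pmf \<mu> K)) (A \<times> B) =
      (\<integral>\<^sup>+ x\<in>A. emeasure (borel_pmf (K x)) B \<partial>marg0 (borel_pmf (joint_pmf \<mu> K)))"
    by (simp add: marg0_borel_joint_pmf)
qed

definition two_point_coupling :: "'a \<Rightarrow> 'a \<Rightarrow> 'b pmf \<Rightarrow> 'b pmf \<Rightarrow> ('a \<times> 'b) pmf" where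
  "two_point_coupling a b P Q = joint_pmf (pmf_of_set {a, b}) (\<lambda>x. if x = a then P else Q)"

lemma set_two_point_coupling:
  "set_pmf (two_point_coupling a b P Q) \<subseteq> {a} \<times> set_pmf P \<union> {b} \<times> set_pmf Q"
  by (auto simp: two_point_coupling_def set_joint_pmf split: if_split_asm)

lemma finite_set_two_point_coupling:
  "finite (set_pmf P) \<Longrightarrow> finite (set_pmf Q) \<Longrightarrow> finite (set_pmf (two_point_coupling a b P Q))"
  by (rule finite_subset[OF set_two_point_coupling]) auto

lemma integral_two_point_coupling:
  fixes h :: "'a \<times> 'b \<Rightarrow> real"
  assumes "a \<noteq> b" and "finite (set_pmf P)" and "finite (set_pmf Q)"
  shows "measure_pmf.expectation (two_point_coupling a b P Q) h =
    (measure_pmf.expectation P (\<lambda>y. h (a, y)) + measure_pmf.expectation Q (\<lambda>y. h (b, y))) / 2"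
  using assms unfolding two_point_coupling_def joint_pmf_def
  by (subst pmf_expectation_bind_pmf_of_set) (auto simp: field_simps)

lemma bind_pmf_of_doubleton_swap:
  assumes "a \<noteq> b"
  shows "bind_pmf (pmf_of_set {a, b}) (\<lambda>x. if x = a then P else Q) =
    bind_pmf (pmf_of_set {a, b}) (\<lambda>x. if x = a then Q else P)"
  using assms by (intro pmf_eqI) (simp add: pmf_bind_pmf_of_set)

lemma measurable_borel_pmf_if:
  fixes a :: "'a::t1_space"
  shows "(\<lambda>x. borel_pmf (if x = a then P else Q)) \<in> measurable borel (prob_algebra borel)"
proof -
  have "(\<lambda>x. if x = a then borel_pmf P else borel_pmf Q) \<in> measurable borel (prob_algebra borel)"
    by (rule measurable_If) (auto simp: borel_pmf_in_prob_algebra intro: borel_closed)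
  then show ?thesis by (simp add: if_distrib)
qed

lemma competitors_two_point_coupling:
  assumes "a \<noteq> b" and fin: "finite (set_pmf P)" "finite (set_pmf Q)"
    and mean: "measure_pmf.expectation P (\<lambda>y. y) = measure_pmf.expectation Q (\<lambda>y. y)"
  shows "competitors (borel_pmf (two_point_coupling a b P Q)) (borel_pmf (two_point_coupling a b Q P))"
  unfolding competitors_def
proof (intro conjI exI)
  show "finite_measure (borel_pmf (two_point_coupling a b P Q))"
    "finite_measure (borel_pmf (two_point_coupling a b Q P))"
    using prob_space_borel_pmf by (auto simp: prob_space_def)
  show "marg0 (borel_pmf (two_point_coupling a b P Q)) = marg0 (borel_pmf (two_point_coupling a b Q P))"
    by (simp add: two_point_coupling_def marg0_borel_joint_pmf)
  show "marg1 (borel_pmf (two_point_coupling a b P Q)) = marg1 (borel_pmf (two_point_coupling a b Q P))"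
    using \<open>a \<noteq> b\<close>
    by (simp add: two_point_coupling_def marg1_borel_joint_pmf bind_pmf_of_doubleton_swap)
  show "disintegration (borel_pmf (two_point_coupling a b P Q)) (\<lambda>x. borel_pmf (if x = a then P else Q))"
    "disintegration (borel_pmf (two_point_coupling a b Q P)) (\<lambda>x. borel_pmf (if x = a then Q else P))"
    unfolding two_point_coupling_def
    by (intro disintegration_borel_joint_pmf measurable_borel_pmf_if)+
  show "AE x in marg0 (borel_pmf (two_point_coupling a b P Q)).
      integrable (borel_pmf (if x = a then P else Q)) (\<lambda>y. y) \<and>
      integrable (borel_pmf (if x = a then Q else P)) (\<lambda>y. y) \<and>
      (\<integral>y. y \<partial>borel_pmf (if x = a then P else Q)) = (\<integral>y. y \<partial>borel_pmf (if x = a then Q else P))"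
    using fin mean by (simp add: integrable_borel_pmf_finite integral_borel_pmf)
qed simp_all

definition competitor_invariant :: "real set \<Rightarrow> real set \<Rightarrow> (real \<times> real \<Rightarrow> real) \<Rightarrow> bool" where
  "competitor_invariant I J f \<longleftrightarrow>
    (\<forall>\<alpha> \<beta>. competitors \<alpha> \<beta> \<longrightarrow> concentrated_on \<alpha> (I \<times> J) \<longrightarrow> concentrated_on \<beta> (I \<times> J) \<longrightarrow>
      set_integrable \<alpha> (I \<times> J) f \<longrightarrow> set_integrable \<beta> (I \<times> J) f \<longrightarrow>
      (LINT z:I \<times> J|\<alpha>. f z) = (LINT z:I \<times> J|\<beta>. f z))"

lemma competitor_invariant_exchange:
  assumes inv: "competitor_invariant I J f" and S: "I \<times> J \<in> sets borel"
    and f: "f \<in> borel_measurable (restrict_space borel (I \<times> J))"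
    and ab: "a \<in> I" "b \<in> I" "a \<noteq> b"
    and PQ: "finite (set_pmf P)" "finite (set_pmf Q)" "set_pmf P \<subseteq> J" "set_pmf Q \<subseteq> J"
    and mean: "measure_pmf.expectation P (\<lambda>y. y) = measure_pmf.expectation Q (\<lambda>y. y)"
  shows "measure_pmf.expectation P (\<lambda>y. f (a, y)) + measure_pmf.expectation Q (\<lambda>y. f (b, y)) =
    measure_pmf.expectation Q (\<lambda>y. f (a, y)) + measure_pmf.expectation P (\<lambda>y. f (b, y))"
proof -
  define \<alpha> where "\<alpha> = two_point_coupling a b P Q"
  define \<beta> where "\<beta> = two_point_coupling a b Q P"
  have supp: "set_pmf \<alpha> \<subseteq> I \<times> J" "set_pmf \<beta> \<subseteq> I \<times> J"
    using set_two_point_coupling[of a b P Q] set_two_point_coupling[of a b Q P] ab PQ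
    unfolding \<alpha>_def \<beta>_def by blast+
  have fin: "finite (set_pmf \<alpha>)" "finite (set_pmf \<beta>)"
    unfolding \<alpha>_def \<beta>_def using PQ by (simp_all add: finite_set_two_point_coupling)
  have "(LINT z:I \<times> J|borel_pmf \<alpha>. f z) = (LINT z:I \<times> J|borel_pmf \<beta>. f z)"
    using inv unfolding competitor_invariant_def
    using competitors_two_point_coupling[OF ab(3) PQ(1,2) mean] supp fin S f
    by (simp add: \<alpha>_def \<beta>_def concentrated_on_borel_pmf set_integrable_borel_pmf_finite)
  then have "measure_pmf.expectation \<alpha> f = measure_pmf.expectation \<beta> f"
    using supp S f by (simp add: set_integral_borel_pmf)
  then show ?thesis
    unfolding \<alpha>_def \<beta>_def using ab PQ by (simp add: integral_two_point_coupling)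
qed

lemma interpolation_if_preserves_convex_combinations:
  fixes g :: "real \<Rightarrow> real"
  assumes H: "\<And>y1 y3 t. y1 \<in> J \<Longrightarrow> y3 \<in> J \<Longrightarrow> 0 \<le> t \<Longrightarrow> t \<le> 1 \<Longrightarrow>
    g (t * y1 + (1 - t) * y3) = t * g y1 + (1 - t) * g y3"
    and pr: "p \<in> J" "r \<in> J" and "p \<le> q" "q \<le> r"
  shows "(r - p) * g q = (r - q) * g p + (q - p) * g r"
proof (cases "p = r")
  case False
  define t where "t = (r - q) / (r - p)"
  have tr: "t * (r - p) = r - q"
    using False by (simp add: t_def)
  then have "q = t * p + (1 - t) * r"
    by (simp add: algebra_simps)
  moreover have "0 \<le> t" "t \<le> 1"
    using \<open>p \<le> q\<close> \<open>q \<le> r\<close> False by (auto simp: t_def field_simps)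
  ultimately have "g q = t * g p + (1 - t) * g r"
    using H[OF pr] by simp
  then have "(r - p) * g q = (r - p) * (t * g p + (1 - t) * g r)"
    by simp
  also have "\<dots> = (t * (r - p)) * g p + ((r - p) - t * (r - p)) * g r"
    by (simp add: algebra_simps)
  finally show ?thesis
    unfolding tr by (simp add: algebra_simps)
qed (use \<open>p \<le> q\<close> \<open>q \<le> r\<close> in simp)

lemma affine_if_preserves_convex_combinations:
  fixes g :: "real \<Rightarrow> real"
  assumes H: "\<And>y1 y3 t. y1 \<in> J \<Longrightarrow> y3 \<in> J \<Longrightarrow> 0 \<le> t \<Longrightarrow> t \<le> 1 \<Longrightarrow>
    g (t * y1 + (1 - t) * y3) = t * g y1 + (1 - t) * g y3"
  shows "\<exists>c d. \<forall>y\<in>J. g y = c + d * y"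
proof (cases "\<exists>u\<in>J. \<exists>v\<in>J. u < v")
  case True
  then obtain u v where u: "u \<in> J" and v: "v \<in> J" and "u < v" by blast
  have interpolation: "(r - p) * g q = (r - q) * g p + (q - p) * g r"
    if "p \<in> J" "r \<in> J" "p \<le> q" "q \<le> r" for p q r
    using that by (intro interpolation_if_preserves_convex_combinations[where J = J] H)
  define d where "d = (g v - g u) / (v - u)"
  define c where "c = g u - d * u"
  have "g y = c + d * y" if y: "y \<in> J" for y
  proof -
    have interpolation_at_y: "(v - u) * g y = (v - y) * g u + (y - u) * g v"
    proof -
      consider "u \<le> y" "y \<le> v" | "y < u" | "v < y" by linarith
      then show ?thesis
      proof cases
        case 1
        then show ?thesis using interpolation[OF u v] by simp
      next
        case 2
        then show ?thesis using interpolation[OF y v, of u] \<open>u < v\<close> by (simp add: algebra_simps)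
      next
        case 3
        then show ?thesis using interpolation[OF u y, of v] \<open>u < v\<close> by (simp add: algebra_simps)
      qed
    qed
    have "(v - u) * d = g v - g u"
      using \<open>u < v\<close> by (simp add: d_def)
    have "(v - u) * (c + d * y) = (v - u) * g u + ((v - u) * d) * (y - u)"
      by (simp add: c_def algebra_simps)
    also have "\<dots> = (v - y) * g u + (y - u) * g v"
      unfolding \<open>(v - u) * d = g v - g u\<close> by (simp add: algebra_simps)
    finally have "(v - u) * (c + d * y) = (v - u) * g y"
      unfolding interpolation_at_y .
    then show ?thesis
      using \<open>u < v\<close> by simp
  qed
  then show ?thesis by blast
next
  case False
  show ?thesis
  proof (cases "J = {}")
    case False
    then obtain u where "u \<in> J" by blast
    with \<open>\<not> (\<exists>u\<in>J. \<exists>v\<in>J. u < v)\<close> have "\<forall>y\<in>J. y = u"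
      by (meson linorder_cases)
    then have "\<forall>y\<in>J. g y = g u + 0 * y"
      by simp
    then show ?thesis by blast
  qed simp
qed

lemma competitor_invariant_difference_affine:
  assumes inv: "competitor_invariant I J f" and "is_interval I" "is_interval J"
    and f: "f \<in> borel_measurable (restrict_space borel (I \<times> J))"
    and a: "a \<in> I" and b: "b \<in> I"
  shows "\<exists>c d. \<forall>y\<in>J. f (b, y) - f (a, y) = c + d * y"
proof (cases "a = b")
  case True
  then show ?thesis by (intro exI[of _ 0]) simp
next
  case False
  have S: "I \<times> J \<in> sets borel"
    using \<open>is_interval I\<close> \<open>is_interval J\<close> by (intro Times_in_sets_borel real_interval_borel_measurable)
  show ?thesis
  proof (rule affine_if_preserves_convex_combinations)
    fix y1 y3 t :: real
    assume y: "y1 \<in> J" "y3 \<in> J" and t: "0 \<le> t" "t \<le> 1"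
    define y2 where "y2 = t * y1 + (1 - t) * y3"
    have "y2 \<in> J"
      using convexD[OF is_interval_convex[OF \<open>is_interval J\<close>] y, of t "1 - t"] t
      by (simp add: y2_def)
    define P where "P = map_pmf (\<lambda>c. if c then y1 else y3) (bernoulli_pmf t)"
    have expectation_P: "measure_pmf.expectation P h = t * h y1 + (1 - t) * h y3" for h :: "real \<Rightarrow> real"
      using t by (simp add: P_def)
    have "finite (set_pmf P)" "set_pmf P \<subseteq> J"
      using y by (auto simp: P_def)
    moreover have "measure_pmf.expectation P (\<lambda>y. y) = measure_pmf.expectation (return_pmf y2) (\<lambda>y. y)"
      by (simp add: expectation_P y2_def)
    ultimately have "t * f (a, y1) + (1 - t) * f (a, y3) + f (b, y2) =
        f (a, y2) + (t * f (b, y1) + (1 - t) * f (b, y3))"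
      using competitor_invariant_exchange[OF inv S f a b False, of P "return_pmf y2"] \<open>y2 \<in> J\<close>
      by (simp add: expectation_P)
    then show "f (b, t * y1 + (1 - t) * y3) - f (a, t * y1 + (1 - t) * y3) =
        t * (f (b, y1) - f (a, y1)) + (1 - t) * (f (b, y3) - f (a, y3))"
      by (simp add: y2_def algebra_simps)
  qed
qed

theorem lemma4p4:
  fixes I J :: "real set" and f :: "real \<times> real \<Rightarrow> real"
  assumes "is_interval I" and "is_interval J"
    and "f \<in> borel_measurable (restrict_space borel (I \<times> J))"
    and "\<And>\<alpha> \<beta>. competitors \<alpha> \<beta> \<Longrightarrow> concentrated_on \<alpha> (I \<times> J) \<Longrightarrow>
           concentrated_on \<beta> (I \<times> J) \<Longrightarrow>
           set_integrable \<alpha> (I \<times> J) f \<Longrightarrow> set_integrable \<beta> (I \<times> J) f \<Longrightarrow>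
           (LINT z:I \<times> J|\<alpha>. f z) = (LINT z:I \<times> J|\<beta>. f z)"
  shows "\<exists>\<phi> \<psi> k :: real \<Rightarrow> real. \<forall>x\<in>I. \<forall>y\<in>J. f (x, y) = \<phi> x + \<psi> y + k x * y"
proof (cases "I = {}")
  case False
  then obtain a where a: "a \<in> I" by blast
  have "competitor_invariant I J f"
    using assms(4) by (simp add: competitor_invariant_def)
  then have "\<forall>x\<in>I. \<exists>c d. \<forall>y\<in>J. f (x, y) - f (a, y) = c + d * y"
    using competitor_invariant_difference_affine[OF _ assms(1-3) a] by blast
  then obtain \<phi> k where "\<forall>x\<in>I. \<forall>y\<in>J. f (x, y) - f (a, y) = \<phi> x + k x * y"
    by metis
  then have "\<forall>x\<in>I. \<forall>y\<in>J. f (x, y) = \<phi> x + f (a, y) + k x * y"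
    by (simp add: algebra_simps)
  then show ?thesis
    by (intro exI[of _ \<phi>] exI[of _ "\<lambda>y. f (a, y)"] exI[of _ k])
qed simp

end
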